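(* Consider a fair division instance with $n$ agents, $m$ divisible goods, additive valuations $v_i(g)$ and generalized assignment constraints with sizes $s_{i,g}$ and budgets $B_i$. Let $\gamma>0$ satisfy: (1) $\gamma\le 1/2$; (2) $\gamma<\min_{i,h\in[n],g\in[m]} v_i(g)/v_h(g)$; (3) if the set $\{(i,h,g,g'):\rho_i(g')>\rho_i(g)\}$ is nonempty, then $\gamma<\frac12\min_{i,h\in[n],\,g,g'\in[m],\,\rho_i(g')>\rho_i(g)}\frac{v_i(g')-v_i(g)\,s_{i,g'}/s_{i,g}}{v_h(g')}$. Let $w\in\mathbb{R}_+^n$ have all components positive and let $x=(x_1,\dots,x_n)$ be a feasible allocation maximizing $\sum_{i=1}^n w_i v_i(x_i)$ over all feasible allocations. If $i,h\in[n]$ are agents with $w_h\le\gamma w_i$, then agent $i$ does not envy agent $h$ under $x$.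
   Context: An allocation is $x=(x_1,\dots,x_n)$ with $x_i\in[0,1]^m$ and $\sum_i x_{i,g}\le1$ for each good $g$. Additive valuations: $v_i(y)=\sum_g y_g v_i(g)$ with $v_i(g)\ge0$ the value of the whole good $g$ to $i$. Generalized assignment constraints: bundle $y$ is feasible for $i$ iff $\sum_g s_{i,g}y_g\le B_i$; an allocation is feasible if each $x_i$ is feasible for $i$. The density of good $g$ for agent $i$ is $\rho_i(g)=v_i(g)/s_{i,g}$. Agent $i$ envies agent $h$ in $x$ if some bundle $y\le x_h$ (componentwise) feasible for $i$ has $v_i(y)>v_i(x_i)$. *)

theory Defs
  imports Complex_Main
begin

(* Agents are elements of a finite type 'a, goods elements of a finite type 'g.
   v i g : value of the whole good g to agent i; s i g : size of g for agent i;
   B i : budget of agent i. *)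

definition val :: "('a \<Rightarrow> 'g::finite \<Rightarrow> real) \<Rightarrow> 'a \<Rightarrow> ('g \<Rightarrow> real) \<Rightarrow> real" where
  "val v i y = (\<Sum>g\<in>UNIV. y g * v i g)"

definition density :: "('a \<Rightarrow> 'g \<Rightarrow> real) \<Rightarrow> ('a \<Rightarrow> 'g \<Rightarrow> real) \<Rightarrow> 'a \<Rightarrow> 'g \<Rightarrow> real" where
  "density v s i g = v i g / s i g"

definition feasible_bundle :: "('a \<Rightarrow> 'g::finite \<Rightarrow> real) \<Rightarrow> ('a \<Rightarrow> real) \<Rightarrow> 'a \<Rightarrow> ('g \<Rightarrow> real) \<Rightarrow> bool" where
  "feasible_bundle s B i y \<longleftrightarrow> (\<forall>g. 0 \<le> y g \<and> y g \<le> 1) \<and> (\<Sum>g\<in>UNIV. s i g * y g) \<le> B i"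

definition is_allocation :: "('a::finite \<Rightarrow> 'g \<Rightarrow> real) \<Rightarrow> bool" where
  "is_allocation x \<longleftrightarrow> (\<forall>i g. 0 \<le> x i g \<and> x i g \<le> 1) \<and> (\<forall>g. (\<Sum>i\<in>UNIV. x i g) \<le> 1)"

definition feasible_allocation :: "('a::finite \<Rightarrow> 'g::finite \<Rightarrow> real) \<Rightarrow> ('a \<Rightarrow> real) \<Rightarrow> ('a \<Rightarrow> 'g \<Rightarrow> real) \<Rightarrow> bool" where
  "feasible_allocation s B x \<longleftrightarrow> is_allocation x \<and> (\<forall>i. feasible_bundle s B i (x i))"

definition envies :: "('a \<Rightarrow> 'g::finite \<Rightarrow> real) \<Rightarrow> ('a \<Rightarrow> 'g \<Rightarrow> real) \<Rightarrow> ('a \<Rightarrow> real)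
    \<Rightarrow> ('a \<Rightarrow> 'g \<Rightarrow> real) \<Rightarrow> 'a \<Rightarrow> 'a \<Rightarrow> bool" where
  "envies v s B x i h \<longleftrightarrow>
     (\<exists>y. (\<forall>g. y g \<le> x h g) \<and> feasible_bundle s B i y \<and> val v i y > val v i (x i))"

end

theory Submission
  imports Defs
begin

(* If i envied h through a bundle y <= x h, moving a little of a good g of y from h to i would
   change the weighted welfare by w_i v_i(g) - w_h v_h(g) > 0 per unit (condition 2 and
   w_h <= gamma w_i), so by optimality of x the budget of i is exhausted. Giving i a good g' of y
   in exchange for the same size of a less dense good g would gain
   w_i (v_i(g') - v_i(g) s_{i,g'} / s_{i,g}) - w_h v_h(g') > 0 per unit (condition 3), so every good
   held by i is at least as dense for i as every good of y. A bundle of no larger size made of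
   goods of no larger density is worth no more, contradicting envy. *)

definition welfare ::
    "('a::finite \<Rightarrow> real) \<Rightarrow> ('a \<Rightarrow> 'g::finite \<Rightarrow> real) \<Rightarrow> ('a \<Rightarrow> 'g \<Rightarrow> real) \<Rightarrow> real" where
  "welfare w v x = (\<Sum>j\<in>UNIV. w j * val v j (x j))"

definition max_welfare ::
    "('a::finite \<Rightarrow> 'g::finite \<Rightarrow> real) \<Rightarrow> ('a \<Rightarrow> real) \<Rightarrow> ('a \<Rightarrow> real) \<Rightarrow> ('a \<Rightarrow> 'g \<Rightarrow> real)
      \<Rightarrow> ('a \<Rightarrow> 'g \<Rightarrow> real) \<Rightarrow> bool" where
  "max_welfare s B w v x \<longleftrightarrow> feasible_allocation s B x \<and>
     (\<forall>x'. feasible_allocation s B x' \<longrightarrow> welfare w v x' \<le> welfare w v x)"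

definition transfer ::
    "('a \<Rightarrow> 'g \<Rightarrow> real) \<Rightarrow> 'a \<Rightarrow> 'a \<Rightarrow> ('g \<Rightarrow> real) \<Rightarrow> ('g \<Rightarrow> real) \<Rightarrow> 'a \<Rightarrow> 'g \<Rightarrow> real" where
  "transfer x i h a e = (\<lambda>j g. if j = i then x i g - a g + e g
                                else if j = h then x h g - e g else x j g)"

lemma sum_mult_single:
  fixes s :: "'g::finite \<Rightarrow> real"
  shows "(\<Sum>k\<in>UNIV. s k * (if k = g then c else 0)) = s g * c"
proof -
  have "(\<Sum>k\<in>UNIV. s k * (if k = g then c else 0)) = (\<Sum>k\<in>UNIV. if k = g then s g * c else 0)"
    by (rule sum.cong) auto
  then show ?thesis by simp
qed

lemma val_single: "val v i (\<lambda>k. if k = g then c else 0) = c * v i g"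
  using sum_mult_single[of "v i" g c] by (simp add: val_def mult.commute)

lemma val_nonneg:
  assumes "\<forall>g. 0 \<le> v i g" and "\<forall>g. 0 \<le> y g"
  shows "0 \<le> val v i y"
  unfolding val_def using assms by (simp add: sum_nonneg)

lemma val_pos_imp_pos_entry:
  assumes "\<forall>g. 0 \<le> v i g" and "0 < val v i y"
  shows "\<exists>g. 0 < y g"
proof (rule ccontr)
  assume "\<not> (\<exists>g. 0 < y g)"
  then have "val v i y \<le> 0"
    unfolding val_def using assms(1) by (intro sum_nonpos) (simp add: mult_nonpos_nonneg not_less)
  with assms(2) show False by simp
qed

lemma feasible_allocation_transfer:
  assumes x_feas: "feasible_allocation s B x" and "i \<noteq> h"
    and a: "\<forall>g. 0 \<le> a g \<and> a g \<le> x i g" and e: "\<forall>g. 0 \<le> e g \<and> e g \<le> x h g"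
    and s_h: "\<forall>g. 0 \<le> s h g"
    and budget_i: "(\<Sum>g\<in>UNIV. s i g * (x i g - a g + e g)) \<le> B i"
  shows "feasible_allocation s B (transfer x i h a e)"
proof -
  let ?x' = "transfer x i h a e"
  have x: "is_allocation x" "\<forall>j. feasible_bundle s B j (x j)"
    using x_feas unfolding feasible_allocation_def by auto
  have nonneg: "0 \<le> ?x' j g" for j g
    using x a e unfolding transfer_def is_allocation_def by auto
  have column: "(\<Sum>j\<in>UNIV. ?x' j g) \<le> 1" for g
  proof -
    have "(\<Sum>j\<in>UNIV. ?x' j g)
        = (\<Sum>j\<in>UNIV. x j g + (if j = i then e g - a g else 0) - (if j = h then e g else 0))"
      by (rule sum.cong) (auto simp: transfer_def \<open>i \<noteq> h\<close>)
    also have "\<dots> = (\<Sum>j\<in>UNIV. x j g) - a g"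
      by (simp add: sum.distrib sum_subtractf)
    also have "\<dots> \<le> 1"
      using x(1) a unfolding is_allocation_def by (meson diff_le_eq order_trans le_add_same_cancel1)
    finally show ?thesis .
  qed
  have le_one: "?x' j g \<le> 1" for j g
    using member_le_sum[of j UNIV "\<lambda>j. ?x' j g"] nonneg column[of g] by simp
  have "(\<Sum>g\<in>UNIV. s j g * ?x' j g) \<le> B j" for j
  proof -
    consider "j = i" | "j = h" | "j \<noteq> i" "j \<noteq> h" by blast
    then show ?thesis
    proof cases
      case 1
      then show ?thesis using budget_i by (simp add: transfer_def)
    next
      case 2
      have "(\<Sum>g\<in>UNIV. s h g * ?x' h g) = (\<Sum>g\<in>UNIV. s h g * (x h g - e g))"
        using \<open>i \<noteq> h\<close> by (simp add: transfer_def)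
      also have "\<dots> \<le> (\<Sum>g\<in>UNIV. s h g * x h g)"
        using s_h e by (intro sum_mono) (simp add: mult_left_mono)
      also have "\<dots> \<le> B h"
        using x(2) by (simp add: feasible_bundle_def)
      finally show ?thesis using 2 by simp
    next
      case 3
      then show ?thesis using x(2) by (simp add: transfer_def feasible_bundle_def)
    qed
  qed
  then show ?thesis
    using nonneg le_one column
    unfolding feasible_allocation_def is_allocation_def feasible_bundle_def by auto
qed

lemma welfare_transfer:
  assumes "i \<noteq> h"
  shows "welfare w v (transfer x i h a e)
    = welfare w v x + w i * (val v i e - val v i a) - w h * val v h e"
proof -
  have "w j * val v j (transfer x i h a e j)
      = w j * val v j (x j) + (if j = i then w i * (val v i e - val v i a) else 0)
        - (if j = h then w h * val v h e else 0)" for j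
    using assms
    by (auto simp: transfer_def val_def algebra_simps sum.distrib sum_subtractf)
  then show ?thesis
    unfolding welfare_def by (simp add: sum.distrib sum_subtractf)
qed

lemma max_welfare_transfer_bound:
  assumes "max_welfare s B w v x" and "i \<noteq> h"
    and "\<forall>g. 0 \<le> a g \<and> a g \<le> x i g" and "\<forall>g. 0 \<le> e g \<and> e g \<le> x h g"
    and "\<forall>g. 0 \<le> s h g"
    and "(\<Sum>g\<in>UNIV. s i g * (x i g - a g + e g)) \<le> B i"
  shows "w i * (val v i e - val v i a) \<le> w h * val v h e"
proof -
  have "feasible_allocation s B (transfer x i h a e)"
    using assms by (intro feasible_allocation_transfer) (auto simp: max_welfare_def)
  then have "welfare w v (transfer x i h a e) \<le> welfare w v x"
    using assms(1) by (simp add: max_welfare_def)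
  then show ?thesis
    by (simp add: welfare_transfer[OF \<open>i \<noteq> h\<close>])
qed

lemma max_welfare_slack_bound:
  assumes opt: "max_welfare s B w v x" and "i \<noteq> h" and s_pos: "\<forall>j g. 0 < s j g"
    and "0 < x h g" and slack: "(\<Sum>k\<in>UNIV. s i k * x i k) < B i"
  shows "w i * v i g \<le> w h * v h g"
proof -
  define c where "c = min (x h g) ((B i - (\<Sum>k\<in>UNIV. s i k * x i k)) / s i g)"
  let ?e = "\<lambda>k. if k = g then c else 0"
  have "0 < c" using assms unfolding c_def by auto
  have x_nonneg: "\<forall>j k. 0 \<le> x j k"
    using opt by (simp add: max_welfare_def feasible_allocation_def is_allocation_def)
  have "c \<le> (B i - (\<Sum>k\<in>UNIV. s i k * x i k)) / s i g"
    unfolding c_def by simp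
  then have "s i g * c \<le> B i - (\<Sum>k\<in>UNIV. s i k * x i k)"
    using s_pos by (simp add: pos_le_divide_eq mult.commute)
  then have "(\<Sum>k\<in>UNIV. s i k * (x i k - 0 + ?e k)) \<le> B i"
    by (simp add: distrib_left sum.distrib sum_mult_single)
  moreover have "\<forall>k. 0 \<le> ?e k \<and> ?e k \<le> x h k"
    using \<open>0 < c\<close> x_nonneg unfolding c_def by auto
  ultimately have "w i * (val v i ?e - val v i (\<lambda>_. 0)) \<le> w h * val v h ?e"
    using s_pos x_nonneg by (intro max_welfare_transfer_bound[OF opt \<open>i \<noteq> h\<close>]) (auto simp: less_imp_le)
  then have "c * (w i * v i g) \<le> c * (w h * v h g)"
    by (simp add: val_single val_def algebra_simps)
  with \<open>0 < c\<close> show ?thesis by simp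
qed

lemma max_welfare_swap_bound:
  assumes opt: "max_welfare s B w v x" and "i \<noteq> h" and s_pos: "\<forall>j g. 0 < s j g"
    and "0 < x i g" and "0 < x h g'"
  shows "w i * (v i g' - v i g * s i g' / s i g) \<le> w h * v h g'"
proof -
  \<comment> \<open>i receives c of g' from h and frees exactly the needed size by discarding \<delta> of g\<close>
  define c where "c = min (x h g') (x i g * s i g / s i g')"
  define \<delta> where "\<delta> = c * s i g' / s i g"
  let ?a = "\<lambda>k. if k = g then \<delta> else 0"
  let ?e = "\<lambda>k. if k = g' then c else 0"
  have "0 < c" using assms unfolding c_def by auto
  have x_feas: "feasible_allocation s B x" using opt by (simp add: max_welfare_def)
  then have x_nonneg: "\<forall>j k. 0 \<le> x j k"
    by (simp add: feasible_allocation_def is_allocation_def)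
  have "c \<le> x i g * s i g / s i g'" unfolding c_def by simp
  then have "\<delta> \<le> x i g"
    using s_pos unfolding \<delta>_def by (simp add: pos_le_divide_eq pos_divide_le_eq)
  moreover have "0 \<le> \<delta>"
    using \<open>0 < c\<close> s_pos unfolding \<delta>_def by (simp add: less_imp_le)
  ultimately have a: "\<forall>k. 0 \<le> ?a k \<and> ?a k \<le> x i k"
    using x_nonneg by auto
  have e: "\<forall>k. 0 \<le> ?e k \<and> ?e k \<le> x h k"
    using \<open>0 < c\<close> x_nonneg unfolding c_def by auto
  have "s i g * \<delta> = s i g' * c"
    using s_pos[rule_format, of i g] unfolding \<delta>_def by simp
  then have "(\<Sum>k\<in>UNIV. s i k * (x i k - ?a k + ?e k)) = (\<Sum>k\<in>UNIV. s i k * x i k)"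
    by (simp add: distrib_left right_diff_distrib sum.distrib sum_subtractf sum_mult_single)
  also have "\<dots> \<le> B i"
    using x_feas by (simp add: feasible_allocation_def feasible_bundle_def)
  finally have "w i * (val v i ?e - val v i ?a) \<le> w h * val v h ?e"
    using a e s_pos by (intro max_welfare_transfer_bound[OF opt \<open>i \<noteq> h\<close>]) (auto simp: less_imp_le)
  then have "c * (w i * (v i g' - v i g * s i g' / s i g)) \<le> c * (w h * v h g')"
    by (simp add: val_single \<delta>_def algebra_simps)
  with \<open>0 < c\<close> show ?thesis by simp
qed

lemma mult_less_mult_of_scaled_le:
  fixes a b c t u :: real
  assumes "0 < a" and "b \<le> c * a" and "0 < t" and "c < u / t"
  shows "b * t < a * u"
proof -
  have "b * t \<le> a * (c * t)" using assms(2,3) by (simp add: mult_right_mono mult.assoc mult.commute)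
  also have "\<dots> < a * u" using assms by (simp add: pos_less_divide_eq)
  finally show ?thesis .
qed

lemma val_le_if_density_separated:
  fixes y z :: "'g::finite \<Rightarrow> real"
  assumes s_pos: "\<forall>g. 0 < s i g" and v_nonneg: "\<forall>g. 0 \<le> v i g"
    and y_nonneg: "\<forall>g. 0 \<le> y g" and z_nonneg: "\<forall>g. 0 \<le> z g"
    and separated: "\<forall>g g'. 0 < z g \<longrightarrow> 0 < y g' \<longrightarrow> density v s i g' \<le> density v s i g"
    and size_le: "(\<Sum>g\<in>UNIV. s i g * y g) \<le> (\<Sum>g\<in>UNIV. s i g * z g)"
  shows "val v i y \<le> val v i z"
proof (cases "\<exists>g. 0 < y g")
  case False
  with y_nonneg have "y = (\<lambda>_. 0)" by (intro ext) (meson antisym not_less)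
  then show ?thesis using val_nonneg[of v i z] v_nonneg z_nonneg by (simp add: val_def)
next
  case True
  define r where "r = Max (density v s i ` {g. 0 < y g})"
  have r_max: "density v s i g \<le> r" if "0 < y g" for g
    unfolding r_def using that by simp
  have "r \<in> density v s i ` {g. 0 < y g}"
    unfolding r_def using True by (intro Max_in) auto
  then obtain g1 where "0 < y g1" and "r = density v s i g1" by blast
  then have "0 \<le> r"
    using s_pos v_nonneg by (simp add: density_def less_imp_le)
  have below: "y g * v i g \<le> r * (s i g * y g)" for g
  proof (cases "0 < y g")
    case True
    then have "v i g \<le> r * s i g"
      using r_max[of g] s_pos by (simp add: density_def pos_divide_le_eq)
    then show ?thesis using True by (simp add: mult_left_mono algebra_simps)
  next
    case False
    then have "y g = 0" using y_nonneg by (meson antisym not_less)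
    then show ?thesis by simp
  qed
  have above: "r * (s i g * z g) \<le> z g * v i g" for g
  proof (cases "0 < z g")
    case True
    then have "r * s i g \<le> v i g"
      using separated \<open>0 < y g1\<close> \<open>r = density v s i g1\<close> s_pos
      by (simp add: density_def pos_le_divide_eq)
    then show ?thesis using True by (simp add: mult_left_mono algebra_simps)
  next
    case False
    then have "z g = 0" using z_nonneg by (meson antisym not_less)
    then show ?thesis by simp
  qed
  have "val v i y \<le> (\<Sum>g\<in>UNIV. r * (s i g * y g))"
    unfolding val_def using below by (rule sum_mono)
  also have "\<dots> \<le> (\<Sum>g\<in>UNIV. r * (s i g * z g))"
    using size_le \<open>0 \<le> r\<close> by (simp add: sum_distrib_left[symmetric] mult_left_mono)
  also have "\<dots> \<le> val v i z"
    unfolding val_def using above by (rule sum_mono)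
  finally show ?thesis .
qed

lemma max_welfare_no_envy:
  assumes opt: "max_welfare s B w v x" and "i \<noteq> h"
    and s_pos: "\<forall>j g. 0 < s j g" and v_nonneg: "\<forall>g. 0 \<le> v i g"
    and weight_value: "\<forall>g. w h * v h g < w i * v i g"
    and weight_gain: "\<forall>g g'. density v s i g < density v s i g' \<longrightarrow>
                        w h * v h g' < w i * (v i g' - v i g * s i g' / s i g)"
  shows "\<not> envies v s B x i h"
proof
  assume "envies v s B x i h"
  then obtain y where y_le: "\<forall>g. y g \<le> x h g" and y_feas: "feasible_bundle s B i y"
    and envy: "val v i (x i) < val v i y"
    unfolding envies_def by blast
  have x_nonneg: "\<forall>j g. 0 \<le> x j g" and y_nonneg: "\<forall>g. 0 \<le> y g"
    using opt y_feas
    by (simp_all add: max_welfare_def feasible_allocation_def is_allocation_def feasible_bundle_def)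
  have x_h_pos: "0 < x h g" if "0 < y g" for g
    using that y_le by (meson less_le_trans)
  have "B i \<le> (\<Sum>g\<in>UNIV. s i g * x i g)"
  proof (rule ccontr)
    assume slack: "\<not> ?thesis"
    obtain g where "0 < y g"
      using val_pos_imp_pos_entry envy val_nonneg v_nonneg x_nonneg by (metis le_less_trans)
    then have "w i * v i g \<le> w h * v h g"
      using max_welfare_slack_bound[OF opt \<open>i \<noteq> h\<close> s_pos] x_h_pos slack by (simp add: not_le)
    with weight_value show False by (meson not_less)
  qed
  then have size_le: "(\<Sum>g\<in>UNIV. s i g * y g) \<le> (\<Sum>g\<in>UNIV. s i g * x i g)"
    using y_feas by (simp add: feasible_bundle_def)
  have separated: "density v s i g' \<le> density v s i g" if "0 < x i g" and "0 < y g'" for g g'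
    using max_welfare_swap_bound[OF opt \<open>i \<noteq> h\<close> s_pos \<open>0 < x i g\<close> x_h_pos[OF \<open>0 < y g'\<close>]]
      weight_gain by (meson not_le not_less)
  have "val v i y \<le> val v i (x i)"
    using s_pos v_nonneg y_nonneg x_nonneg separated size_le
    by (intro val_le_if_density_separated) auto
  with envy show False by simp
qed

theorem lemma3:
  fixes v s :: "'a::finite \<Rightarrow> 'g::finite \<Rightarrow> real"
    and B w :: "'a \<Rightarrow> real"
    and x :: "'a \<Rightarrow> 'g \<Rightarrow> real"
    and \<gamma> :: real
    and i h :: 'a
  assumes v_nonneg: "\<forall>i g. 0 \<le> v i g"
    and s_pos: "\<forall>i g. 0 < s i g"
    and gamma_pos: "0 < \<gamma>"
    and cond1: "\<gamma> \<le> 1/2"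
    and cond2: "\<forall>i h g. \<gamma> < v i g / v h g"
    and cond3: "\<forall>i h g g'. density v s i g' > density v s i g \<longrightarrow>
                  \<gamma> < (1/2) * ((v i g' - v i g * s i g' / s i g) / v h g')"
    and w_pos: "\<forall>j. 0 < w j"
    and x_feas: "feasible_allocation s B x"
    and x_opt: "\<forall>x'. feasible_allocation s B x' \<longrightarrow>
                  (\<Sum>j\<in>UNIV. w j * val v j (x' j)) \<le> (\<Sum>j\<in>UNIV. w j * val v j (x j))"
    and w_hi: "w h \<le> \<gamma> * w i"
  shows "\<not> envies v s B x i h"
proof -
  \<comment> \<open>with division by zero giving 0, cond2 at h = i rules out v j g = 0\<close>
  have v_pos: "0 < v j g" for j g
    using cond2[rule_format, of j g j] v_nonneg[rule_format, of j g] gamma_pos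
    by (cases "v j g = 0") auto
  have weighted: "w h * t < w i * u" if "0 < t" and "\<gamma> < u / t" for t u
    using w_pos w_hi that by (intro mult_less_mult_of_scaled_le) auto
  have "w h < w i" using weighted[of 1 1] cond1 by simp
  then have "i \<noteq> h" by auto
  have opt: "max_welfare s B w v x"
    using x_feas x_opt by (simp add: max_welfare_def welfare_def)
  have "w h * v h g' < w i * (v i g' - v i g * s i g' / s i g)"
    if "density v s i g < density v s i g'" for g g'
  proof -
    let ?q = "(v i g' - v i g * s i g' / s i g) / v h g'"
    have "\<gamma> < (1/2) * ?q" using cond3 that by blast
    \<comment> \<open>the factor 1/2 in cond3 is slack: the argument only needs \<gamma> < ?q\<close>
    then have "\<gamma> < ?q" using gamma_pos by linarith
    then show ?thesis using v_pos by (intro weighted) auto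
  qed
  moreover have "w h * v h g < w i * v i g" for g
    using cond2 v_pos by (intro weighted) auto
  ultimately show ?thesis
    using v_nonneg by (intro max_welfare_no_envy[OF opt \<open>i \<noteq> h\<close> s_pos]) auto
qed

end
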